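(* Let $k\ge 1$ be an integer with $4\nmid k$ such that $\mathcal{D}:=(k^2+4)/\gcd(2,k)^2$ is squarefree, let $\alpha=\frac{k+\sqrt{k^2+4}}{2}$, and let $p\ge 3$ be a prime. Let $\delta_p$ denote the Legendre symbol $\left(\frac{k^2+4}{p}\right)$. Then (1) $\operatorname{ord}_m(\alpha)=\pi(m)$ for $m\in\{p,p^2\}$; (2) $\alpha^{p-1}\equiv 1 \pmod{p}$ if $\delta_p=1$; (3) $\alpha^{p+1}\equiv -1 \pmod{p}$ if $\delta_p=-1$.
   Context: Let $(U_n)$ be defined by $U_0=0$, $U_1=1$, $U_n=kU_{n-1}+U_{n-2}$ for $n\ge 2$, and let $\pi(m)$ be the length of the period of $(U_n)$ modulo an integer $m\ge 2$. Congruences involving $\alpha$ are taken in the ring of algebraic integers of $\mathbb{Q}(\sqrt{k^2+4})$ (i.e., $x\equiv y \pmod m$ means $(x-y)/m$ is an algebraic integer), and $\operatorname{ord}_m(\alpha)$ denotes the multiplicative order of $\alpha$ modulo $m$ in this sense. *)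

theory Defs
  imports "HOL-Computational_Algebra.Computational_Algebra" "HOL-Number_Theory.Number_Theory"
begin

fun U :: "int \<Rightarrow> nat \<Rightarrow> int" where
  "U k 0 = 0"
| "U k (Suc 0) = 1"
| "U k (Suc (Suc n)) = k * U k (Suc n) + U k n"

definition period_mod :: "int \<Rightarrow> int \<Rightarrow> nat" where
  "period_mod k m = (LEAST n. n > 0 \<and> (\<forall>i. [U k (i + n) = U k i] (mod m)))"

definition alpha :: "int \<Rightarrow> real" where
  "alpha k = (of_int k + sqrt (of_int (k^2 + 4))) / 2"

definition cong_alg :: "real \<Rightarrow> real \<Rightarrow> int \<Rightarrow> bool" where
  "cong_alg x y m \<longleftrightarrow> algebraic_int ((x - y) / of_int m)"

definition ord_alg :: "int \<Rightarrow> real \<Rightarrow> nat" where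
  "ord_alg m x = (LEAST n. n > 0 \<and> cong_alg (x ^ n) 1 m)"

end

theory Submission
  imports Defs
begin

(* Since alpha^2 = k alpha + 1, every power is alpha^(n+1) = U(n+1) alpha + U(n), so
   alpha^(n+1) - c = (U(n) - c) + U(n+1) alpha.  For m = p^e with p an odd prime, (a + b alpha)/m
   is an algebraic integer exactly when m divides a and b: if it is, its minimal polynomial has
   integer coefficients (Gauss's lemma), so m divides the trace 2a + bk and m^2 the norm
   a^2 + abk - b^2, and squarefreeness of (k^2 + 4)/gcd(2,k)^2 then forces m | b and m | a.
   Hence alpha^n = 1 (mod m) iff m | U(n) and m | U(n-1) - 1, which is precisely the condition
   for n to be a period of (U_n) modulo m; this gives (1).  For (2) and (3), expanding
   (k + sqrt(k^2 + 4))^p = 2^p alpha^p binomially modulo p and applying Euler's criterion yields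
   U(p) = delta_p and k U(p) + 2 U(p-1) = k (mod p); the recurrence then gives
   p | U(p-1), U(p-2) = 1 when delta_p = 1 and U(p-1) = k, p | U(p+1) when delta_p = -1. *)

lemma map_poly_of_int_add:
  "map_poly (of_int :: int \<Rightarrow> 'a :: ring_1) (p + q) = map_poly of_int p + map_poly of_int q"
  by (rule poly_eqI) (simp add: coeff_map_poly)

lemma map_poly_of_int_mult:
  "map_poly (of_int :: int \<Rightarrow> 'a :: comm_ring_1) (p * q) = map_poly of_int p * map_poly of_int q"
  by (induction p) (simp_all add: map_poly_pCons map_poly_smult map_poly_of_int_add)

lemma root_of_linear_int_poly_in_Rats:
  fixes x :: "'a :: field_char_0"
  assumes "degree r \<le> 1" "r \<noteq> 0" "poly (map_poly of_int r) x = 0"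
  shows "x \<in> \<rat>"
proof -
  have r: "r = [:Polynomial.coeff r 0, Polynomial.coeff r 1:]"
    using assms(1) by (intro poly_eqI) (auto simp: coeff_pCons coeff_eq_0 split: nat.splits)
  have "of_int (Polynomial.coeff r 0) + x * of_int (Polynomial.coeff r 1) = 0"
    using assms(3) by (subst (asm) r) (simp add: map_poly_pCons)
  moreover have "Polynomial.coeff r 1 \<noteq> 0"
    using assms(2) calculation by (subst (asm) r) auto
  ultimately have "x = - of_int (Polynomial.coeff r 0) / of_int (Polynomial.coeff r 1)"
    by (simp add: field_simps) (metis add.commute eq_neg_iff_add_eq_0)
  then show ?thesis by simp
qed

lemma of_int_plus_irrational_eq_iff:
  fixes s :: "'a :: field_char_0"
  assumes "s \<notin> \<rat>"
  shows "of_int a + of_int b * s = of_int c + of_int d * s \<longleftrightarrow> a = c \<and> b = d"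
proof
  assume eq: "of_int a + of_int b * s = of_int c + of_int d * s"
  show "a = c \<and> b = d"
  proof (cases "b = d")
    case False
    with eq have "s = of_int (c - a) / of_int (b - d)"
      by (simp add: field_simps)
    with assms show ?thesis by simp
  qed (use eq in simp)
qed simp

lemma algebraic_int_quadratic_root_lead_coeff_dvd:
  fixes x :: "'a :: field_char_0" and q :: "int poly"
  assumes x: "algebraic_int x" "x \<notin> \<rat>"
    and q: "degree q = 2" "poly (map_poly of_int q) x = 0"
  shows "lead_coeff q dvd Polynomial.coeff q i"
proof -
  obtain P where P: "poly (map_poly of_int P) x = 0" "lead_coeff P = 1"
    using x(1) unfolding algebraic_int_altdef_ipoly by blast
  have "q \<noteq> 0" using q(1) by auto
  obtain Q R where QR: "pseudo_divmod P q = (Q, R)" by (metis surj_pair)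
  define M where "M = lead_coeff q ^ (Suc (degree P) - 2)"
  have div: "Polynomial.smult M P = q * Q + R" and "R = 0 \<or> degree R < 2"
    using pseudo_divmod[OF \<open>q \<noteq> 0\<close> QR] q(1) by (simp_all add: M_def)
  have "poly (map_poly of_int R) x = 0"
    using arg_cong[OF div, of "\<lambda>r. poly (map_poly of_int r) x"] P(1) q(2)
    by (simp add: map_poly_smult map_poly_of_int_add map_poly_of_int_mult)
  with \<open>R = 0 \<or> degree R < 2\<close> x(2) have "R = 0"
    using root_of_linear_int_poly_in_Rats[of R x] by linarith
  with div have div': "Polynomial.smult M P = q * Q" by simp
  have "M \<noteq> 0" using \<open>q \<noteq> 0\<close> by (simp add: M_def)
  then have "Q \<noteq> 0" using div' P(2) by auto
  have "M = lead_coeff q * lead_coeff Q"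
    using arg_cong[OF div', of lead_coeff] P(2) \<open>M \<noteq> 0\<close> by (simp add: lead_coeff_mult)
  moreover have "content Q dvd lead_coeff Q" by simp
  ultimately have "lead_coeff q * content Q dvd M"
    by (simp add: mult_dvd_mono)
  also have "M dvd content q * content Q"
  proof -
    have "\<bar>M\<bar> * content P = content q * content Q"
      using arg_cong[OF div', of content] by (simp add: content_mult)
    then show ?thesis by (metis abs_dvd_iff dvd_triv_left)
  qed
  finally have "lead_coeff q dvd content q"
    using \<open>Q \<noteq> 0\<close> by simp
  then show ?thesis using content_dvd_coeff dvd_trans by blast
qed

lemma square_plus_4_not_square:
  fixes z k :: int
  assumes "k \<noteq> 0"
  shows "z^2 \<noteq> k^2 + 4"
proof
  assume eq: "z^2 = k^2 + 4"
  have "\<bar>k\<bar> < \<bar>z\<bar>"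
  proof (rule ccontr)
    assume "\<not> \<bar>k\<bar> < \<bar>z\<bar>"
    then have "\<bar>z\<bar>^2 \<le> \<bar>k\<bar>^2" by (intro power_mono) auto
    then show False using eq by simp
  qed
  moreover have "\<bar>z\<bar> < \<bar>k\<bar> + 2"
  proof (rule ccontr)
    assume "\<not> \<bar>z\<bar> < \<bar>k\<bar> + 2"
    then have "(\<bar>k\<bar> + 2)^2 \<le> \<bar>z\<bar>^2" by (intro power_mono) auto
    then show False using assms eq by (simp add: power2_eq_square algebra_simps)
  qed
  ultimately have "\<bar>z\<bar> = \<bar>k\<bar> + 1" by simp
  then have "k^2 + 4 = (\<bar>k\<bar> + 1)^2"
    using eq by (metis power2_abs)
  then have "2 * \<bar>k\<bar> = 3"
    by (simp add: power2_sum)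
  then show False by presburger
qed

lemma prime_power_dvd_of_dvd_square_mult_squarefree:
  fixes q c D :: int
  assumes "prime q" "squarefree D" "q^(2*e) dvd c^2 * D"
  shows "q^e dvd c"
  using assms(3)
proof (induction e arbitrary: c)
  case (Suc e)
  have "q^2 dvd q^(2 * Suc e)"
    by (rule le_imp_power_dvd) simp
  then have "q^2 dvd c^2 * D"
    using Suc.prems by (rule dvd_trans)
  have "q dvd c"
  proof (rule ccontr)
    assume "\<not> q dvd c"
    then have "coprime (q^2) (c^2)" using assms(1) by (simp add: prime_imp_coprime)
    with \<open>q^2 dvd c^2 * D\<close> have "q^2 dvd D" by (simp add: coprime_dvd_mult_right_iff)
    then show False using assms(1,2) squarefreeD not_prime_unit by blast
  qed
  then obtain c' where c: "c = q * c'" by (elim dvdE)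
  have "q^(2 * Suc e) = q^2 * q^(2*e)"
    by (metis mult_Suc_right power_add)
  moreover have "c^2 * D = q^2 * (c'^2 * D)"
    unfolding c by (simp add: power_mult_distrib)
  ultimately have "q^2 * q^(2*e) dvd q^2 * (c'^2 * D)"
    using Suc.prems by metis
  then have "q^(2*e) dvd c'^2 * D"
    using assms(1) by (simp add: prime_ge_2_int)
  then show ?case using Suc.IH c by simp
qed simp

lemma fermat_little_int:
  fixes a :: int
  assumes "prime p"
  shows "[a ^ p = a] (mod int p)"
proof -
  have "0 < p" using assms by (simp add: prime_gt_0_nat)
  define n where "n = nat (a mod int p)"
  have "int n = a mod int p"
    using \<open>0 < p\<close> by (simp add: n_def)
  then have an: "[a = int n] (mod int p)"
    by (simp add: cong_def)
  have "[n ^ p = n] (mod p)"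
  proof (cases "p dvd n")
    case True
    moreover have "n dvd n ^ p"
      using \<open>0 < p\<close> by (simp add: dvd_power)
    ultimately show ?thesis
      by (simp add: cong_def dvd_trans)
  next
    case False
    then have "[n * n ^ (p - 1) = n * 1] (mod p)"
      by (intro cong_scalar_left fermat_theorem[OF assms])
    moreover have "n * n ^ (p - 1) = n ^ p"
      using \<open>0 < p\<close> by (cases p) simp_all
    ultimately show ?thesis by simp
  qed
  then have "[int n ^ p = int n] (mod int p)"
    unfolding of_nat_power[symmetric] cong_int_iff .
  with cong_pow[OF an] have "[a ^ p = int n] (mod int p)"
    by (rule cong_trans)
  then show ?thesis
    using cong_sym[OF an] by (rule cong_trans)
qed

lemma binomial_power_prime_quadratic:
  fixes s :: "'a :: comm_ring_1" and a D :: int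
  assumes "prime p" "odd p" "s^2 = of_int D"
  shows "\<exists>X Y. (of_int a + s) ^ p
    = of_int (a ^ p) + of_int (D ^ ((p - 1) div 2)) * s + of_nat p * (of_int X + of_int Y * s)"
proof -
  have s_power: "s ^ j = of_int (D ^ (j div 2)) * s ^ (j mod 2)" for j
  proof -
    have "s ^ j = (s^2) ^ (j div 2) * s ^ (j mod 2)"
      by (simp flip: power_mult power_add)
    then show ?thesis using assms(3) by simp
  qed
  have "0 < p" using assms(1) by (simp add: prime_gt_0_nat)
  define T where "T j = int ((p choose j) div p) * D ^ (j div 2) * a ^ (p - j)" for j
  define X where "X = (\<Sum>j\<in>{1..<p}. if even j then T j else 0)"
  define Y where "Y = (\<Sum>j\<in>{1..<p}. if odd j then T j else 0)"
  have middle_term: "of_nat (p choose j) * s ^ j * of_int a ^ (p - j)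
      = of_nat p * (of_int (if even j then T j else 0) + of_int (if odd j then T j else 0) * s)"
    if "j \<in> {1..<p}" for j
  proof -
    have "p dvd p choose j"
      using that assms(1) by (intro dvd_choose_prime) auto
    then have "of_nat (p choose j) = (of_nat p * of_nat ((p choose j) div p) :: 'a)"
      by (simp flip: of_nat_mult)
    then show ?thesis
      by (subst s_power) (simp add: T_def mod_2_eq_odd algebra_simps)
  qed
  have "(of_int a + s) ^ p = (\<Sum>j\<le>p. of_nat (p choose j) * s ^ j * of_int a ^ (p - j))"
    by (subst add.commute) (rule binomial_ring)
  also have "{..p} = insert 0 (insert p {1..<p})"
    using \<open>0 < p\<close> by auto
  also have "(\<Sum>j\<in>insert 0 (insert p {1..<p}). of_nat (p choose j) * s ^ j * of_int a ^ (p - j))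
      = of_int (a ^ p) + s ^ p + (\<Sum>j\<in>{1..<p}. of_nat (p choose j) * s ^ j * of_int a ^ (p - j))"
    using \<open>0 < p\<close> by (simp add: algebra_simps)
  also have "s ^ p = of_int (D ^ ((p - 1) div 2)) * s"
    using assms(2) by (subst s_power) (auto elim!: oddE)
  also have "(\<Sum>j\<in>{1..<p}. of_nat (p choose j) * s ^ j * of_int a ^ (p - j))
      = of_nat p * (of_int X + of_int Y * s)"
    by (simp add: middle_term X_def Y_def distrib_left sum_distrib_left sum_distrib_right sum.distrib)
  finally show ?thesis by blast
qed

lemma sqrt_square_plus_4_irrational:
  fixes k :: int
  assumes "k \<noteq> 0"
  shows "sqrt (of_int (k^2 + 4)) \<notin> \<rat>"
proof
  assume "sqrt (of_int (k^2 + 4)) \<in> \<rat>"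
  moreover have "algebraic_int (sqrt (of_int (k^2 + 4)))"
    by (intro algebraic_int_sqrt algebraic_int_of_int)
  ultimately have "sqrt (of_int (k^2 + 4)) \<in> \<int>"
    using rational_algebraic_int_is_int by blast
  then obtain z where "sqrt (of_int (k^2 + 4)) = of_int z"
    by (auto elim: Ints_cases)
  then have "of_int (z^2) = (of_int (k^2 + 4) :: real)"
    by (metis of_int_power real_sqrt_pow2 add_nonneg_nonneg of_int_nonneg zero_le_power2 zero_le_numeral)
  then show False
    using square_plus_4_not_square[OF assms] by (simp only: of_int_eq_iff)
qed

lemma alpha_square: "alpha k ^ 2 = of_int k * alpha k + 1"
proof -
  have "sqrt (of_int (k^2 + 4)) ^ 2 = (of_int k ^ 2 + 4 :: real)"
    by (simp add: add_nonneg_nonneg)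
  then show ?thesis
    unfolding alpha_def by (simp add: power2_eq_square field_simps)
qed

lemma alpha_power: "alpha k ^ Suc n = of_int (U k (Suc n)) * alpha k + of_int (U k n)"
proof (induction n)
  case (Suc n)
  have "alpha k ^ Suc (Suc n) = of_int (U k (Suc n)) * alpha k ^ 2 + of_int (U k n) * alpha k"
    using Suc by (simp add: algebra_simps power2_eq_square)
  then show ?case by (simp add: alpha_square algebra_simps)
qed simp

lemma algebraic_int_of_int_plus_alpha:
  "algebraic_int (of_int a + of_int b * alpha k)"
proof -
  define P :: "int poly" where "P = [:a^2 + a*b*k - b^2, -(2*a + b*k), 1:]"
  have "poly (map_poly of_int P) (of_int a + of_int b * alpha k) =
      (of_int b)^2 * (alpha k ^ 2 - of_int k * alpha k - 1)"
    by (simp add: P_def map_poly_pCons algebra_simps power2_eq_square)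
  also have "\<dots> = 0" by (simp add: alpha_square)
  finally show ?thesis
    unfolding algebraic_int_altdef_ipoly by (intro exI[of _ P]) (simp add: P_def)
qed

text \<open>\<open>2a + bk\<close> and \<open>a\<^sup>2 + abk - b\<^sup>2\<close> are the trace and norm of \<open>a + b\<alpha>\<close>. The quotient by \<open>m\<close> is
  a root of \<open>m\<^sup>2X\<^sup>2 - m(2a + bk)X + (a\<^sup>2 + abk - b\<^sup>2)\<close>, which by Gauss's lemma must have all
  coefficients divisible by \<open>m\<^sup>2\<close>.\<close>
lemma algebraic_int_div_imp_dvd_trace_norm:
  fixes a b k m :: int
  assumes "k \<noteq> 0" "m \<noteq> 0"
    and "algebraic_int ((of_int a + of_int b * alpha k) / of_int m)"
  shows "m dvd 2*a + b*k \<and> m^2 dvd a^2 + a*b*k - b^2"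
proof (cases "b = 0")
  case True
  then have "(of_int a / of_int m :: real) \<in> \<int>"
    using assms(3) by (intro rational_algebraic_int_is_int) auto
  then obtain z where "of_int a / of_int m = (of_int z :: real)"
    by (auto elim: Ints_cases)
  then have "a = z * m"
    using assms(2) by (simp add: field_simps flip: of_int_mult)
  with True show ?thesis by (simp add: power2_eq_square)
next
  case False
  define x where "x = (of_int a + of_int b * alpha k) / (of_int m :: real)"
  have mx: "of_int m * x = of_int a + of_int b * alpha k"
    using assms(2) by (simp add: x_def)
  have "x \<notin> \<rat>"
  proof
    assume "x \<in> \<rat>"
    have "sqrt (of_int (k^2 + 4)) = (2 * of_int m * x - 2 * of_int a - of_int b * of_int k) / of_int b"
      using mx False unfolding alpha_def by (simp add: field_simps)
    also have "\<dots> \<in> \<rat>"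
      using \<open>x \<in> \<rat>\<close> by (intro Rats_divide Rats_diff Rats_mult) auto
    finally show False
      using sqrt_square_plus_4_irrational[OF assms(1)] by simp
  qed
  define q :: "int poly" where "q = [:a^2 + a*b*k - b^2, -((2*a + b*k) * m), m^2:]"
  have "poly (map_poly of_int q) x
      = (of_int m * x)^2 - of_int (2*a + b*k) * (of_int m * x) + of_int (a^2 + a*b*k - b^2)"
    by (simp add: q_def map_poly_pCons algebra_simps power2_eq_square)
  also have "\<dots> = (of_int b)^2 * (alpha k ^ 2 - of_int k * alpha k - 1)"
    unfolding mx by (simp add: algebra_simps power2_eq_square)
  also have "\<dots> = 0" by (simp add: alpha_square)
  finally have root: "poly (map_poly of_int q) x = 0" .
  have "degree q = 2" and "lead_coeff q = m^2"
    using assms(2) by (simp_all add: q_def)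
  with root have "m^2 dvd Polynomial.coeff q i" for i
    using algebraic_int_quadratic_root_lead_coeff_dvd assms(3) \<open>x \<notin> \<rat>\<close> x_def by metis
  from this[of 0] this[of 1] show ?thesis
    using assms(2) by (simp add: q_def power2_eq_square)
qed

text \<open>The discriminant identity \<open>b\<^sup>2(k\<^sup>2 + 4) = (2a + bk)\<^sup>2 - 4(a\<^sup>2 + abk - b\<^sup>2)\<close> transfers the
  divisibility of trace and norm to \<open>b\<close>.\<close>
lemma dvd_coords_of_dvd_trace_norm:
  fixes q a b k g D :: int
  assumes "prime q" "odd q" "squarefree D" "k^2 + 4 = g^2 * D" "g dvd 2"
    and "q^e dvd 2*a + b*k" "(q^e)^2 dvd a^2 + a*b*k - b^2"
  shows "q^e dvd a \<and> q^e dvd b"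
proof -
  have "coprime q 2" using assms(2) by simp
  then have "coprime (q^e) g" "coprime (q^e) 2"
    using coprime_divisors[OF dvd_refl assms(5)] by simp_all
  have "(q^e)^2 dvd (2*a + b*k)^2 - 4 * (a^2 + a*b*k - b^2)"
    using dvd_power_same[OF assms(6)] dvd_mult[OF assms(7)] by (rule dvd_diff)
  also have "\<dots> = (b*g)^2 * D"
    by (simp add: power_mult_distrib mult.assoc flip: assms(4)) (simp add: algebra_simps power2_eq_square)
  finally have "q^e dvd b * g"
    using prime_power_dvd_of_dvd_square_mult_squarefree[OF assms(1,3)] by (simp add: power_even_eq)
  with \<open>coprime (q^e) g\<close> have "q^e dvd b" by (simp add: coprime_dvd_mult_left_iff)
  then have "q^e dvd 2 * a"
    using assms(6) by (metis add_diff_cancel_right' dvd_diff dvd_mult2 mult.commute)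
  with \<open>coprime (q^e) 2\<close> have "q^e dvd a" by (simp add: coprime_dvd_mult_right_iff)
  with \<open>q^e dvd b\<close> show ?thesis by simp
qed

lemma algebraic_int_div_prime_power_iff:
  fixes a b k :: int and p e :: nat
  assumes "k \<noteq> 0" "squarefree ((k^2 + 4) div (gcd 2 k)^2)" "prime p" "odd p"
  shows "algebraic_int ((of_int a + of_int b * alpha k) / of_int (int p ^ e))
    \<longleftrightarrow> int p ^ e dvd a \<and> int p ^ e dvd b"
proof
  assume "algebraic_int ((of_int a + of_int b * alpha k) / of_int (int p ^ e))"
  then have "int p ^ e dvd 2*a + b*k" "(int p ^ e)^2 dvd a^2 + a*b*k - b^2"
    using algebraic_int_div_imp_dvd_trace_norm[OF assms(1)] assms(3) by auto
  moreover have "(gcd 2 k)^2 dvd k^2 + 2^2"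
    by (intro dvd_add dvd_power_same) auto
  then have "k^2 + 4 = (gcd 2 k)^2 * ((k^2 + 4) div (gcd 2 k)^2)"
    by simp
  ultimately show "int p ^ e dvd a \<and> int p ^ e dvd b"
    using assms(2-4) by (intro dvd_coords_of_dvd_trace_norm[where g = "gcd 2 k"]) auto
next
  assume "int p ^ e dvd a \<and> int p ^ e dvd b"
  then obtain c d where "a = int p ^ e * c" "b = int p ^ e * d"
    by (auto elim!: dvdE)
  then have "(of_int a + of_int b * alpha k) / of_int (int p ^ e) = of_int c + of_int d * alpha k"
    using assms(3) by (simp add: field_simps prime_gt_0_nat)
  then show "algebraic_int ((of_int a + of_int b * alpha k) / of_int (int p ^ e))"
    using algebraic_int_of_int_plus_alpha by simp
qed

lemma cong_alg_alpha_power_iff: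
  fixes c k :: int and p e n :: nat
  assumes "k \<noteq> 0" "squarefree ((k^2 + 4) div (gcd 2 k)^2)" "prime p" "odd p"
  shows "cong_alg (alpha k ^ Suc n) (of_int c) (int p ^ e)
    \<longleftrightarrow> int p ^ e dvd U k n - c \<and> int p ^ e dvd U k (Suc n)"
proof -
  have "alpha k ^ Suc n - of_int c = of_int (U k n - c) + of_int (U k (Suc n)) * alpha k"
    unfolding alpha_power by (simp add: algebra_simps)
  then show ?thesis
    unfolding cong_alg_def by (simp only: algebraic_int_div_prime_power_iff[OF assms])
qed

lemma cong_alg_alpha_power_if_cong:
  fixes c k m :: int
  assumes "m \<noteq> 0" "[U k n = c] (mod m)" "[U k (Suc n) = 0] (mod m)"
  shows "cong_alg (alpha k ^ Suc n) (of_int c) m"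
proof -
  obtain x y where xy: "U k n - c = m * x" "U k (Suc n) = m * y"
    using assms(2,3) by (auto simp: cong_iff_dvd_diff cong_0_iff elim!: dvdE)
  have "alpha k ^ Suc n - of_int c = of_int (U k n - c) + of_int (U k (Suc n)) * alpha k"
    unfolding alpha_power by (simp add: algebra_simps)
  also have "\<dots> = of_int m * (of_int x + of_int y * alpha k)"
    unfolding xy by (simp add: algebra_simps)
  finally have "(alpha k ^ Suc n - of_int c) / of_int m = of_int x + of_int y * alpha k"
    using assms(1) by simp
  then show ?thesis
    unfolding cong_alg_def using algebraic_int_of_int_plus_alpha by simp
qed

lemma U_periodic_mod_iff:
  "(\<forall>i. [U k (i + Suc n) = U k i] (mod m)) \<longleftrightarrow> m dvd U k n - 1 \<and> m dvd U k (Suc n)"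
proof
  assume periodic: "\<forall>i. [U k (i + Suc n) = U k i] (mod m)"
  have "m dvd U k (Suc n)"
    using periodic[rule_format, of 0] by (simp add: cong_0_iff)
  moreover have "m dvd U k (Suc (Suc n)) - 1"
    using periodic[rule_format, of 1] by (simp add: cong_iff_dvd_diff cong_sym_eq)
  moreover have "U k n - 1 = (U k (Suc (Suc n)) - 1) - k * U k (Suc n)"
    by simp
  ultimately show "m dvd U k n - 1 \<and> m dvd U k (Suc n)"
    by (metis dvd_diff dvd_mult)
next
  assume dvd: "m dvd U k n - 1 \<and> m dvd U k (Suc n)"
  have "[U k (i + Suc n) = U k i] (mod m) \<and> [U k (Suc i + Suc n) = U k (Suc i)] (mod m)" for i
  proof (induction i)
    case 0
    have "m dvd k * U k (Suc n) + (U k n - 1)"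
      using dvd by simp
    then show ?case
      using dvd by (simp add: cong_0_iff cong_iff_dvd_diff algebra_simps)
  next
    case (Suc i)
    then have "[k * U k (Suc i + Suc n) + U k (i + Suc n) = k * U k (Suc i) + U k i] (mod m)"
      by (intro cong_add cong_mult) auto
    with Suc show ?case by simp
  qed
  then show "\<forall>i. [U k (i + Suc n) = U k i] (mod m)" by blast
qed

lemma ord_alg_alpha_eq_period_mod:
  fixes k :: int and p e :: nat
  assumes "k \<noteq> 0" "squarefree ((k^2 + 4) div (gcd 2 k)^2)" "prime p" "odd p"
  shows "ord_alg (int p ^ e) (alpha k) = period_mod k (int p ^ e)"
proof -
  have "n > 0 \<and> cong_alg (alpha k ^ n) 1 (int p ^ e)
    \<longleftrightarrow> n > 0 \<and> (\<forall>i. [U k (i + n) = U k i] (mod int p ^ e))" for n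
    using cong_alg_alpha_power_iff[OF assms, where n = "n - 1" and c = 1 and e = e]
      U_periodic_mod_iff[of k "n - 1"]
    by (cases n) simp_all
  then show ?thesis
    unfolding ord_alg_def period_mod_def by simp
qed

text \<open>Fermat's congruences \<open>U\<^sub>p \<equiv> \<delta>\<^sub>p\<close> and \<open>V\<^sub>p \<equiv> k\<close> for the companion sequence
  \<open>V\<^sub>n = k U\<^sub>n + 2 U\<^sub>n\<^sub>-\<^sub>1\<close>, obtained by comparing \<open>(k + \<surd>(k\<^sup>2 + 4))\<^sup>p = 2\<^sup>p \<alpha>\<^sup>p\<close> with its
  binomial expansion modulo \<open>p\<close>.\<close>
lemma U_prime_congs:
  fixes k :: int and p :: nat
  assumes "k \<noteq> 0" "prime p" "odd p"
  shows "[U k p = Legendre (k^2 + 4) (int p)] (mod int p)"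
    and "[k * U k p + 2 * U k (p - 1) = k] (mod int p)"
proof -
  define s where "s = sqrt (of_int (k^2 + 4))"
  have "s^2 = of_int (k^2 + 4)"
    by (simp add: s_def add_nonneg_nonneg)
  then obtain X Y where binomial: "(of_int k + s) ^ p
      = of_int (k ^ p) + of_int ((k^2 + 4) ^ ((p - 1) div 2)) * s + of_nat p * (of_int X + of_int Y * s)"
    using binomial_power_prime_quadratic[OF assms(2,3)] by blast
  have "0 < p"
    using assms(2) by (simp add: prime_gt_0_nat)
  have "of_int k + s = 2 * alpha k"
    by (simp add: alpha_def s_def)
  then have "(of_int k + s) ^ p = 2 ^ Suc (p - 1) * alpha k ^ Suc (p - 1)"
    by (simp only: power_mult_distrib Suc_diff_1[OF \<open>0 < p\<close>])
  also have "\<dots> = 2 ^ (p - 1) * (of_int (U k p) * (2 * alpha k) + 2 * of_int (U k (p - 1)))"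
    unfolding alpha_power power_Suc[of 2] using \<open>0 < p\<close> by (simp add: algebra_simps)
  also have "\<dots>
      = of_int (2 ^ (p - 1) * (k * U k p + 2 * U k (p - 1))) + of_int (2 ^ (p - 1) * U k p) * s"
    unfolding \<open>of_int k + s = 2 * alpha k\<close>[symmetric] by (simp add: algebra_simps)
  finally have "of_int (2 ^ (p - 1) * (k * U k p + 2 * U k (p - 1))) + of_int (2 ^ (p - 1) * U k p) * s
      = of_int (k ^ p + int p * X) + of_int ((k^2 + 4) ^ ((p - 1) div 2) + int p * Y) * s"
    unfolding binomial by (simp add: algebra_simps)
  then have "2 ^ (p - 1) * (k * U k p + 2 * U k (p - 1)) = k ^ p + int p * X
      \<and> 2 ^ (p - 1) * U k p = (k^2 + 4) ^ ((p - 1) div 2) + int p * Y"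
    using of_int_plus_irrational_eq_iff[OF sqrt_square_plus_4_irrational[OF assms(1)], folded s_def]
    by blast
  then have V: "[2 ^ (p - 1) * (k * U k p + 2 * U k (p - 1)) = k ^ p] (mod int p)"
    and U: "[2 ^ (p - 1) * U k p = (k^2 + 4) ^ ((p - 1) div 2)] (mod int p)"
    by (simp_all add: cong_iff_dvd_diff)
  have "[2 * 2 ^ (p - 1) = 2 * 1] (mod int p)"
    using fermat_little_int[OF assms(2), of 2]
    by (simp only: power_Suc[symmetric] Suc_diff_1[OF \<open>0 < p\<close>] mult_1_right)
  moreover have "coprime 2 (int p)"
    using assms(3) by simp
  ultimately have "[2 ^ (p - 1) = 1] (mod int p)"
    using cong_mult_lcancel by blast
  then have two: "[1 = 2 ^ (p - 1)] (mod int p)"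
    by (rule cong_sym)
  have "[U k p = 2 ^ (p - 1) * U k p] (mod int p)"
    using cong_scalar_right[OF two] by simp
  also note U
  also have "[(k^2 + 4) ^ ((p - 1) div 2) = Legendre (k^2 + 4) (int p)] (mod int p)"
  proof -
    have "p \<noteq> 2" using assms(3) by auto
    then have "2 < p" using prime_ge_2_nat[OF assms(2)] by simp
    then show ?thesis using euler_criterion[OF assms(2)] by (simp add: cong_sym_eq)
  qed
  finally show "[U k p = Legendre (k^2 + 4) (int p)] (mod int p)" .
  have "[k * U k p + 2 * U k (p - 1) = 2 ^ (p - 1) * (k * U k p + 2 * U k (p - 1))] (mod int p)"
    using cong_scalar_right[OF two] by simp
  also note V
  also have "[k ^ p = k] (mod int p)"
    by (rule fermat_little_int[OF assms(2)])
  finally show "[k * U k p + 2 * U k (p - 1) = k] (mod int p)" .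
qed

lemma alpha_power_pred_cong_one:
  fixes k :: int and p :: nat
  assumes "k \<noteq> 0" "prime p" "odd p" "Legendre (k^2 + 4) (int p) = 1"
  shows "cong_alg (alpha k ^ (p - 1)) 1 (int p)"
proof -
  have U: "[U k p = 1] (mod int p)" and V: "[k * U k p + 2 * U k (p - 1) = k] (mod int p)"
    using U_prime_congs[OF assms(1-3)] assms(4) by simp_all
  have "2 \<le> p" using assms(2) by (rule prime_ge_2_nat)
  then have p1: "Suc (p - 2) = p - 1" and p2: "Suc (p - 1) = p"
    by simp_all
  have "[k * U k p + 2 * U k (p - 1) - k * U k p = k - k * 1] (mod int p)"
    using V cong_scalar_left[OF U] by (rule cong_diff)
  then have "[2 * U k (p - 1) = 2 * 0] (mod int p)"
    by simp
  moreover have "coprime 2 (int p)"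
    using assms(3) by simp
  ultimately have U_pred: "[U k (p - 1) = 0] (mod int p)"
    using cong_mult_lcancel by blast
  have "U k p = k * U k (p - 1) + U k (p - 2)"
    using U.simps(3)[of k "p - 2"] unfolding p1 p2 .
  then have "U k (p - 2) = U k p - k * U k (p - 1)"
    by simp
  also have "[\<dots> = 1 - k * 0] (mod int p)"
    using U cong_scalar_left[OF U_pred] by (rule cong_diff)
  finally have "[U k (p - 2) = 1] (mod int p)"
    by simp
  then show ?thesis
    using cong_alg_alpha_power_if_cong[of "int p" k "p - 2" 1] U_pred assms(2)
    unfolding p1 by simp
qed

lemma alpha_power_succ_cong_minus_one:
  fixes k :: int and p :: nat
  assumes "k \<noteq> 0" "prime p" "odd p" "Legendre (k^2 + 4) (int p) = -1"
  shows "cong_alg (alpha k ^ (p + 1)) (-1) (int p)"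
proof -
  have U: "[U k p = -1] (mod int p)" and V: "[k * U k p + 2 * U k (p - 1) = k] (mod int p)"
    using U_prime_congs[OF assms(1-3)] assms(4) by simp_all
  have p: "Suc (p - 1) = p"
    using assms(2) by (simp add: prime_gt_0_nat)
  have "[k * U k p + 2 * U k (p - 1) - k * U k p = k - k * -1] (mod int p)"
    using V cong_scalar_left[OF U] by (rule cong_diff)
  then have "[2 * U k (p - 1) = 2 * k] (mod int p)"
    by simp
  moreover have "coprime 2 (int p)"
    using assms(3) by simp
  ultimately have U_pred: "[U k (p - 1) = k] (mod int p)"
    using cong_mult_lcancel by blast
  have "U k (Suc p) = k * U k p + U k (p - 1)"
    using U.simps(3)[of k "p - 1"] unfolding p .
  also have "[\<dots> = k * -1 + k] (mod int p)"
    using cong_scalar_left[OF U] U_pred by (rule cong_add)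
  finally have "[U k (Suc p) = 0] (mod int p)"
    by simp
  then show ?thesis
    using cong_alg_alpha_power_if_cong[of "int p" k p "-1"] U assms(2) by simp
qed

theorem lemma3p2:
  fixes k :: int and p :: nat
  assumes "k \<ge> 1"
    and "\<not> (4 dvd k)"
    and "squarefree ((k^2 + 4) div (gcd 2 k)^2)"
    and "prime p" and "p \<ge> 3"
  shows "(\<forall>m \<in> {int p, int p ^ 2}. ord_alg m (alpha k) = period_mod k m)
    \<and> (Legendre (k^2 + 4) (int p) = 1 \<longrightarrow> cong_alg (alpha k ^ (p - 1)) 1 (int p))
    \<and> (Legendre (k^2 + 4) (int p) = -1 \<longrightarrow> cong_alg (alpha k ^ (p + 1)) (-1) (int p))"
proof -
  have "k \<noteq> 0" using assms(1) by simp
  have "odd p"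
    using assms(4,5) prime_odd_nat by auto
  have "ord_alg (int p ^ e) (alpha k) = period_mod k (int p ^ e)" for e
    using ord_alg_alpha_eq_period_mod[OF \<open>k \<noteq> 0\<close> assms(3,4) \<open>odd p\<close>] .
  from this[of 1] this[of 2] show ?thesis
    using alpha_power_pred_cong_one[OF \<open>k \<noteq> 0\<close> assms(4) \<open>odd p\<close>]
      alpha_power_succ_cong_minus_one[OF \<open>k \<noteq> 0\<close> assms(4) \<open>odd p\<close>]
    by simp
qed

end
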